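(* Let $S:\mathbb{R}^m\times\mathbb{R}^n\to\mathbb{R}^q$ be bilinear with lifted operator $\mathscr{S}$, let $\mathcal{K}'\subseteq\mathbb{R}^{m\times n}$ and $\mathcal{M}=\mathcal{K}'-\mathcal{K}'$. Let $X\in\mathcal{N}(\mathscr{S},2)\cap\mathcal{M}\setminus\{0\}$ be a given $m\times n$ real matrix and $\delta\in(0,1)$. Let $\mathbf{M}=xy^T=\sigma uv^T$ be a random rank one matrix, where $x\in\mathbb{R}^m$, $y\in\mathbb{R}^n$ are random vectors satisfying: (A1) $x$ and $y$ each have zero mean and identity covariance; (A2) $x$ and $y$ are mutually independent; (A3) $\|x\|_2$ and $x/\|x\|_2$ are independent, and $\|y\|_2$ and $y/\|y\|_2$ are independent; here $u=x/\|x\|_2$, $v=y/\|y\|_2$. Then $\Pr(\|P_{\mathcal{C}(X)}u\|_2^2\ge1-\delta)\le\frac{2}{m(1-\delta)}$ and $\Pr(\|P_{\mathcal{R}(X)}v\|_2^2\ge1-\delta)\le\frac{2}{n(1-\delta)}$.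
   Context: For $j=1,\dots,q$ let $S_j$ be the unique matrix with $(S(x,y))_j=x^TS_jy$; the lifted operator is $(\mathscr{S}(W))_j=\operatorname{tr}(S_j^TW)$. $\mathcal{N}(\mathscr{S},k)=\{X:\operatorname{rank}(X)\le k,\ \mathscr{S}(X)=0\}$; $\mathcal{K}'-\mathcal{K}'=\{X_1-X_2:X_1,X_2\in\mathcal{K}'\}$. $\mathcal{C}(X)$, $\mathcal{R}(X)$ are the column and row spaces of $X$, and $P_{\mathcal{V}}$ is the orthogonal projection matrix onto a subspace $\mathcal{V}$. *)

theory Defs
  imports "HOL-Analysis.Analysis" "HOL-Probability.Probability"
begin

text \<open>S_j is the matrix with entries (S_j)_{ab} = (S(e_a,e_b))_j, so that
  (S(x,y))_j = x^T S_j y; the lifted operator is (lifted S W)_j = tr(S_j^T W).\<close>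
definition bil_matrix ::
  "(real^'m \<Rightarrow> real^'n \<Rightarrow> real^'q) \<Rightarrow> 'q \<Rightarrow> real^'n^'m" where
  "bil_matrix S j = (\<chi> a b. S (axis a 1) (axis b 1) $ j)"

definition trace_mat :: "real^'k^'k \<Rightarrow> real" where
  "trace_mat A = (\<Sum>i\<in>UNIV. A $ i $ i)"

definition lifted ::
  "(real^'m \<Rightarrow> real^'n \<Rightarrow> real^'q) \<Rightarrow> real^'n^'m \<Rightarrow> real^'q" where
  "lifted S W = (\<chi> j. trace_mat (transpose (bil_matrix S j) ** W))"

definition null_low_rank ::
  "(real^'m \<Rightarrow> real^'n \<Rightarrow> real^'q) \<Rightarrow> nat \<Rightarrow> (real^'n^'m) set" where
  "null_low_rank S k = {X. rank X \<le> k \<and> lifted S X = 0}"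

definition diff_set :: "'a::ab_group_add set \<Rightarrow> 'a set" where
  "diff_set K = {X1 - X2 | X1 X2. X1 \<in> K \<and> X2 \<in> K}"

definition col_space :: "real^'n^'m \<Rightarrow> (real^'m) set" where
  "col_space X = span (columns X)"

definition row_space :: "real^'n^'m \<Rightarrow> (real^'n) set" where
  "row_space X = span (rows X)"

definition orth_proj :: "(real^'k) set \<Rightarrow> real^'k \<Rightarrow> real^'k" where
  "orth_proj V x = (THE p. p \<in> V \<and> (\<forall>w\<in>V. (x - p) \<bullet> w = 0))"

definition proj_matrix :: "(real^'k) set \<Rightarrow> real^'k^'k" where
  "proj_matrix V = (\<chi> i j. orth_proj V (axis j 1) $ i)"

definition indep_rv ::
  "'w measure \<Rightarrow> ('w \<Rightarrow> 'a::topological_space) \<Rightarrow> ('w \<Rightarrow> 'b::topological_space) \<Rightarrow> bool" where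
  "indep_rv M X Y \<longleftrightarrow>
     (\<forall>A\<in>sets borel. \<forall>B\<in>sets borel.
        measure M {\<omega>\<in>space M. X \<omega> \<in> A \<and> Y \<omega> \<in> B}
          = measure M {\<omega>\<in>space M. X \<omega> \<in> A} * measure M {\<omega>\<in>space M. Y \<omega> \<in> B})"

end

theory Submission
  imports Defs
begin

text \<open>Let \<open>u = x / \<parallel>x\<parallel>\<close> and \<open>A = {\<parallel>P u\<parallel>\<^sup>2 \<ge> c}\<close> for the orthogonal projection \<open>P\<close>
  onto a subspace \<open>V\<close>. Since \<open>\<parallel>x\<parallel>\<^sup>2\<close> and \<open>u\<close> are independent,
  \<open>E \<parallel>x\<parallel>\<^sup>2 \<cdot> Pr A = E [\<parallel>x\<parallel>\<^sup>2 1\<^sub>A] \<le> E \<parallel>P x\<parallel>\<^sup>2 / c\<close>, because \<open>\<parallel>P x\<parallel>\<^sup>2 = \<parallel>x\<parallel>\<^sup>2 \<parallel>P u\<parallel>\<^sup>2\<close>.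
  Isotropy gives \<open>E \<parallel>x\<parallel>\<^sup>2 = m\<close> and \<open>E \<parallel>P x\<parallel>\<^sup>2 = dim V\<close>, so \<open>Pr A \<le> dim V / (m c)\<close>;
  for the column and row spaces of \<open>X\<close> the dimension is \<open>rank X \<le> 2\<close>.\<close>

lemma orthonormal_inner_eq:
  assumes "pairwise orthogonal B" "\<And>b. b \<in> B \<Longrightarrow> norm b = 1" "b \<in> B" "b' \<in> B"
  shows "b \<bullet> b' = (if b = b' then 1 else 0)"
  using assms by (auto simp: pairwise_def orthogonal_def dot_square_norm)

lemma orth_proj_eq_sum_orthonormal:
  fixes V :: "(real^'k) set"
  assumes BV: "span B = V" and orth: "pairwise orthogonal B"
    and unit: "\<And>b. b \<in> B \<Longrightarrow> norm b = 1" and fin: "finite B"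
  shows "orth_proj V z = (\<Sum>b\<in>B. (z \<bullet> b) *\<^sub>R b)"
proof -
  define f where "f = (\<Sum>b\<in>B. (z \<bullet> b) *\<^sub>R b)"
  have fV: "f \<in> V" unfolding f_def BV[symmetric]
    by (intro span_sum span_mul span_base)
  have "orthogonal (z - f) b" if "b \<in> B" for b
  proof -
    have "f \<bullet> b = (\<Sum>b'\<in>B. (z \<bullet> b') * (b' \<bullet> b))" unfolding f_def by (simp add: inner_sum_left)
    also have "\<dots> = (\<Sum>b'\<in>B. if b' = b then z \<bullet> b else 0)"
      by (rule sum.cong) (auto simp: orthonormal_inner_eq[OF orth unit] that)
    also have "\<dots> = z \<bullet> b" using fin that by simp
    finally show ?thesis by (simp add: orthogonal_def inner_diff_left)
  qed
  then have perp: "(z - f) \<bullet> w = 0" if "w \<in> V" for w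
    using orthogonal_to_span[of w B "z - f"] that BV by (auto simp: orthogonal_def)
  show ?thesis unfolding orth_proj_def f_def[symmetric]
  proof (rule the_equality)
    show "f \<in> V \<and> (\<forall>w\<in>V. (z - f) \<bullet> w = 0)" using fV perp by auto
  next
    fix p assume p: "p \<in> V \<and> (\<forall>w\<in>V. (z - p) \<bullet> w = 0)"
    have "p - f \<in> V" using p fV BV subspace_diff subspace_span by blast
    then have "(z - f) \<bullet> (p - f) - (z - p) \<bullet> (p - f) = 0" using p perp by simp
    then have "(p - f) \<bullet> (p - f) = 0" by (simp add: algebra_simps inner_diff_left)
    then show "p = f" by simp
  qed
qed

lemma norm_proj_matrix_power2_eq_sum:
  fixes V :: "(real^'k) set"
  assumes BV: "span B = V" and orth: "pairwise orthogonal B"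
    and unit: "\<And>b. b \<in> B \<Longrightarrow> norm b = 1" and fin: "finite B"
  shows "(norm (proj_matrix V *v z))\<^sup>2 = (\<Sum>b\<in>B. (z \<bullet> b)\<^sup>2)"
proof -
  have lin: "linear (\<lambda>z. \<Sum>b\<in>B. (z \<bullet> b) *\<^sub>R b)"
    by (intro linear_compose_sum linearI ballI) (auto simp: algebra_simps inner_add_left)
  have "proj_matrix V = matrix (\<lambda>z. \<Sum>b\<in>B. (z \<bullet> b) *\<^sub>R b)"
    by (simp add: proj_matrix_def matrix_def orth_proj_eq_sum_orthonormal[OF assms])
  then have "proj_matrix V *v z = (\<Sum>b\<in>B. (z \<bullet> b) *\<^sub>R b)"
    by (simp add: matrix_vector_mul(2)[OF lin])
  moreover have "(norm (\<Sum>b\<in>B. (z \<bullet> b) *\<^sub>R b))\<^sup>2 = (\<Sum>b\<in>B. (z \<bullet> b)\<^sup>2)"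
  proof -
    have "(norm (\<Sum>b\<in>B. (z \<bullet> b) *\<^sub>R b))\<^sup>2
        = (\<Sum>b\<in>B. \<Sum>b'\<in>B. (z \<bullet> b) * (z \<bullet> b') * (b \<bullet> b'))"
      by (simp add: power2_norm_eq_inner inner_sum_left inner_sum_right sum_distrib_left)
         (auto intro!: sum.cong simp: inner_commute)
    also have "\<dots> = (\<Sum>b\<in>B. \<Sum>b'\<in>B. if b' = b then (z \<bullet> b)\<^sup>2 else 0)"
      by (intro sum.cong refl) (auto simp: orthonormal_inner_eq[OF orth unit] power2_eq_square)
    also have "\<dots> = (\<Sum>b\<in>B. (z \<bullet> b)\<^sup>2)" using fin by simp
    finally show ?thesis .
  qed
  ultimately show ?thesis by simp
qed

lemma indep_rv_compose:
  fixes X :: "'w \<Rightarrow> 'a::topological_space" and Y :: "'w \<Rightarrow> 'b::topological_space"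
    and f :: "'a \<Rightarrow> 'c::topological_space" and g :: "'b \<Rightarrow> 'd::topological_space"
  assumes "indep_rv M X Y" "f \<in> borel_measurable borel" "g \<in> borel_measurable borel"
  shows "indep_rv M (\<lambda>\<omega>. f (X \<omega>)) (\<lambda>\<omega>. g (Y \<omega>))"
  unfolding indep_rv_def
proof (intro ballI)
  fix A :: "'c set" and B :: "'d set" assume AB: "A \<in> sets borel" "B \<in> sets borel"
  have "f -` A \<in> sets borel" "g -` B \<in> sets borel"
    using measurable_sets[OF assms(2) AB(1)] measurable_sets[OF assms(3) AB(2)] by simp_all
  with assms(1) have "measure M {\<omega> \<in> space M. X \<omega> \<in> f -` A \<and> Y \<omega> \<in> g -` B}
      = measure M {\<omega> \<in> space M. X \<omega> \<in> f -` A} * measure M {\<omega> \<in> space M. Y \<omega> \<in> g -` B}"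
    unfolding indep_rv_def by blast
  then show "measure M {\<omega> \<in> space M. f (X \<omega>) \<in> A \<and> g (Y \<omega>) \<in> B} =
       measure M {\<omega> \<in> space M. f (X \<omega>) \<in> A} * measure M {\<omega> \<in> space M. g (Y \<omega>) \<in> B}"
    by simp
qed

lemma Int_stable_vimage_sets:
  "Int_stable {X -` A \<inter> space M |A. A \<in> sets N}"
proof (safe intro!: Int_stableI)
  fix A B assume "A \<in> sets N" "B \<in> sets N"
  then show "\<exists>C. (X -` A \<inter> space M) \<inter> (X -` B \<inter> space M) = X -` C \<inter> space M \<and> C \<in> sets N"
    by (intro exI[of _ "A \<inter> B"]) auto
qed

lemma (in prob_space) indep_rv_imp_indep_var:
  fixes X Y :: "'a \<Rightarrow> 'b::topological_space"
  assumes "X \<in> borel_measurable M" "Y \<in> borel_measurable M" "indep_rv M X Y"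
  shows "indep_var borel X borel Y"
  unfolding indep_var_eq
proof (intro conjI indep_set_sigma_sets Int_stable_vimage_sets assms(1,2))
  show "indep_set {X -` A \<inter> space M |A. A \<in> sets borel} {Y -` B \<inter> space M |B. B \<in> sets borel}"
  proof (safe intro!: indep_setI)
    fix A B :: "'b set" assume "A \<in> sets borel" "B \<in> sets borel"
    with assms(3) have "prob {\<omega>\<in>space M. X \<omega> \<in> A \<and> Y \<omega> \<in> B}
        = prob {\<omega>\<in>space M. X \<omega> \<in> A} * prob {\<omega>\<in>space M. Y \<omega> \<in> B}"
      unfolding indep_rv_def by blast
    moreover have "X -` A \<inter> space M \<inter> (Y -` B \<inter> space M) = {\<omega>\<in>space M. X \<omega> \<in> A \<and> Y \<omega> \<in> B}"
      "X -` A \<inter> space M = {\<omega>\<in>space M. X \<omega> \<in> A}" "Y -` B \<inter> space M = {\<omega>\<in>space M. Y \<omega> \<in> B}"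
      by auto
    ultimately show "prob (X -` A \<inter> space M \<inter> (Y -` B \<inter> space M)) =
        prob (X -` A \<inter> space M) * prob (Y -` B \<inter> space M)"
      by simp
  qed (use assms(1,2) measurable_sets in auto)
qed

lemma (in prob_space) integral_mult_indicator_indep:
  fixes X :: "'a \<Rightarrow> real"
  assumes Xm: "X \<in> borel_measurable M" and Ym: "Y \<in> borel_measurable M"
    and ind: "indep_rv M X Y" and Xint: "integrable M X" and S: "S \<in> sets borel"
  shows "integrable M (\<lambda>\<omega>. X \<omega> * indicator S (Y \<omega>))"
    and "(\<integral>\<omega>. X \<omega> * indicator S (Y \<omega>) \<partial>M) = expectation X * prob {\<omega> \<in> space M. Y \<omega> \<in> S}"
proof -
  have ISm: "(\<lambda>v. indicator S v :: real) \<in> borel_measurable borel" using S by measurable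
  have "indep_rv M (\<lambda>\<omega>. id (X \<omega>)) (\<lambda>\<omega>. indicator S (Y \<omega>) :: real)"
    by (rule indep_rv_compose[OF ind _ ISm]) simp
  then have iv: "indep_var borel X borel (\<lambda>\<omega>. indicator S (Y \<omega>) :: real)"
    using Xm Ym ISm by (intro indep_rv_imp_indep_var) auto
  have Iint: "integrable M (\<lambda>\<omega>. indicator S (Y \<omega>) :: real)"
    using Ym ISm by (intro integrable_const_bound[where B=1]) (auto simp: indicator_def)
  have event: "{\<omega> \<in> space M. Y \<omega> \<in> S} \<in> events" using Ym S by measurable
  have "(\<integral>\<omega>. indicator S (Y \<omega>) \<partial>M) = (\<integral>\<omega>. indicator {\<omega> \<in> space M. Y \<omega> \<in> S} \<omega> \<partial>M)"
    by (rule Bochner_Integration.integral_cong) (auto simp: indicator_def)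
  also have "\<dots> = prob {\<omega> \<in> space M. Y \<omega> \<in> S}"
    using event by simp
  finally show "(\<integral>\<omega>. X \<omega> * indicator S (Y \<omega>) \<partial>M) = expectation X * prob {\<omega> \<in> space M. Y \<omega> \<in> S}"
    using indep_var_lebesgue_integral[OF iv Xint Iint] by simp
  show "integrable M (\<lambda>\<omega>. X \<omega> * indicator S (Y \<omega>))"
    using indep_var_integrable[OF iv Xint Iint] .
qed

lemma norm_matrix_vector_mult_direction:
  fixes A :: "real^'n^'m"
  shows "(norm z)\<^sup>2 * (norm (A *v (z /\<^sub>R norm z)))\<^sup>2 = (norm (A *v z))\<^sup>2"
  by (cases "z = 0") (simp_all add: matrix_vector_mult_scaleR power_mult_distrib power_inverse)

context
  fixes M :: "'w measure" and x :: "'w \<Rightarrow> real^'k"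
  assumes integrable_mom: "\<And>i j. integrable M (\<lambda>\<omega>. x \<omega> $ i * x \<omega> $ j)"
    and isotropic: "\<And>i j. (\<integral>\<omega>. x \<omega> $ i * x \<omega> $ j \<partial>M) = (if i = j then 1 else 0)"
begin

lemma integrable_inner_power2: "integrable M (\<lambda>\<omega>. (x \<omega> \<bullet> w)\<^sup>2)"
  and integral_inner_power2: "(\<integral>\<omega>. (x \<omega> \<bullet> w)\<^sup>2 \<partial>M) = w \<bullet> w"
proof -
  have eq: "(\<lambda>\<omega>. (x \<omega> \<bullet> w)\<^sup>2) = (\<lambda>\<omega>. \<Sum>i\<in>UNIV. \<Sum>j\<in>UNIV. (w$i * w$j) * (x \<omega> $ i * x \<omega> $ j))"
    by (auto simp: inner_vec_def power2_eq_square sum_product mult_ac)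
  show "integrable M (\<lambda>\<omega>. (x \<omega> \<bullet> w)\<^sup>2)"
    unfolding eq by (simp add: integrable_mom)
  have "(\<integral>\<omega>. (x \<omega> \<bullet> w)\<^sup>2 \<partial>M) = (\<Sum>i\<in>UNIV. \<Sum>j\<in>UNIV. (w$i * w$j) * (if i = j then 1 else 0))"
    unfolding eq by (simp add: integrable_mom isotropic)
  also have "\<dots> = w \<bullet> w" unfolding inner_vec_def
    by (intro sum.cong refl) (simp add: if_distrib[of "\<lambda>t. _ * t"] cong: if_cong)
  finally show "(\<integral>\<omega>. (x \<omega> \<bullet> w)\<^sup>2 \<partial>M) = w \<bullet> w" .
qed

lemma integrable_norm_power2: "integrable M (\<lambda>\<omega>. (norm (x \<omega>))\<^sup>2)"
  and integral_norm_power2: "(\<integral>\<omega>. (norm (x \<omega>))\<^sup>2 \<partial>M) = real CARD('k)"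
proof -
  have eq: "(\<lambda>\<omega>. (norm (x \<omega>))\<^sup>2) = (\<lambda>\<omega>. \<Sum>i\<in>UNIV. x \<omega> $ i * x \<omega> $ i)"
    by (simp add: power2_norm_eq_inner inner_vec_def)
  show "integrable M (\<lambda>\<omega>. (norm (x \<omega>))\<^sup>2)" unfolding eq by (simp add: integrable_mom)
  show "(\<integral>\<omega>. (norm (x \<omega>))\<^sup>2 \<partial>M) = real CARD('k)" unfolding eq by (simp add: integrable_mom isotropic)
qed

lemma
  assumes "subspace V"
  shows integrable_norm_proj_matrix_power2: "integrable M (\<lambda>\<omega>. (norm (proj_matrix V *v x \<omega>))\<^sup>2)"
    and integral_norm_proj_matrix_power2: "(\<integral>\<omega>. (norm (proj_matrix V *v x \<omega>))\<^sup>2 \<partial>M) = dim V"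
proof -
  obtain B where B: "pairwise orthogonal B" "\<And>b. b \<in> B \<Longrightarrow> norm b = 1"
      "independent B" "card B = dim V" "span B = V"
    using orthonormal_basis_subspace[OF assms] by metis
  have eq: "(\<lambda>\<omega>. (norm (proj_matrix V *v x \<omega>))\<^sup>2) = (\<lambda>\<omega>. \<Sum>b\<in>B. (x \<omega> \<bullet> b)\<^sup>2)"
    using norm_proj_matrix_power2_eq_sum[OF B(5,1,2) finiteI_independent[OF B(3)]] by simp
  show "integrable M (\<lambda>\<omega>. (norm (proj_matrix V *v x \<omega>))\<^sup>2)"
    unfolding eq by (simp add: integrable_inner_power2)
  have "(\<integral>\<omega>. (\<Sum>b\<in>B. (x \<omega> \<bullet> b)\<^sup>2) \<partial>M) = (\<Sum>b\<in>B. 1)"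
    using B(2) by (simp add: integrable_inner_power2 integral_inner_power2 dot_square_norm)
  then show "(\<integral>\<omega>. (norm (proj_matrix V *v x \<omega>))\<^sup>2 \<partial>M) = dim V"
    unfolding eq by (simp add: B(4))
qed

end

lemma prob_norm_proj_direction_ge_le:
  fixes x :: "'w \<Rightarrow> real^'k"
  assumes P: "prob_space M" and xm: "x \<in> borel_measurable M"
    and integrable_mom: "\<And>i j. integrable M (\<lambda>\<omega>. x \<omega> $ i * x \<omega> $ j)"
    and isotropic: "\<And>i j. (\<integral>\<omega>. x \<omega> $ i * x \<omega> $ j \<partial>M) = (if i = j then 1 else 0)"
    and ind: "indep_rv M (\<lambda>\<omega>. norm (x \<omega>)) (\<lambda>\<omega>. x \<omega> /\<^sub>R norm (x \<omega>))"
    and V: "subspace V" and c: "0 < c"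
  shows "measure M {\<omega> \<in> space M. c \<le> (norm (proj_matrix V *v (x \<omega> /\<^sub>R norm (x \<omega>))))\<^sup>2}
           \<le> dim V / (real CARD('k) * c)"
proof -
  interpret prob_space M by (rule P)
  define u where "u \<omega> = x \<omega> /\<^sub>R norm (x \<omega>)" for \<omega>
  define S where "S = {v. c \<le> (norm (proj_matrix V *v v))\<^sup>2}"
  define A where "A = {\<omega> \<in> space M. u \<omega> \<in> S}"
  have Pm: "(\<lambda>v. (norm (proj_matrix V *v v))\<^sup>2) \<in> borel_measurable borel"
    by (intro borel_measurable_continuous_onI continuous_intros)
  then have S_borel: "S \<in> sets borel" unfolding S_def by measurable
  have um: "u \<in> borel_measurable M" unfolding u_def using xm by measurable
  have sq: "(\<lambda>r::real. r\<^sup>2) \<in> borel_measurable borel" by measurable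
  have "indep_rv M (\<lambda>\<omega>. (norm (x \<omega>))\<^sup>2) u"
    using indep_rv_compose[OF ind sq measurable_id] unfolding u_def by simp
  then have "(\<integral>\<omega>. (norm (x \<omega>))\<^sup>2 * indicator S (u \<omega>) \<partial>M) = real CARD('k) * prob A"
    and int_A: "integrable M (\<lambda>\<omega>. (norm (x \<omega>))\<^sup>2 * indicator S (u \<omega>))"
    using integral_mult_indicator_indep[of "\<lambda>\<omega>. (norm (x \<omega>))\<^sup>2" u S] xm um S_borel
      integrable_norm_power2[OF integrable_mom isotropic] integral_norm_power2[OF integrable_mom isotropic]
    by (simp_all add: A_def)
  moreover have "(norm (x \<omega>))\<^sup>2 * indicator S (u \<omega>) \<le> (norm (proj_matrix V *v x \<omega>))\<^sup>2 / c" for \<omega>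
  proof (cases "u \<omega> \<in> S")
    case True
    then have "(norm (x \<omega>))\<^sup>2 * c \<le> (norm (x \<omega>))\<^sup>2 * (norm (proj_matrix V *v u \<omega>))\<^sup>2"
      unfolding S_def by (simp add: mult_left_mono)
    then show ?thesis
      using True c norm_matrix_vector_mult_direction[of "x \<omega>" "proj_matrix V"]
      by (simp add: u_def pos_le_divide_eq)
  qed (use c in simp)
  then have "(\<integral>\<omega>. (norm (x \<omega>))\<^sup>2 * indicator S (u \<omega>) \<partial>M)
      \<le> (\<integral>\<omega>. (norm (proj_matrix V *v x \<omega>))\<^sup>2 / c \<partial>M)"
    using int_A integrable_norm_proj_matrix_power2[OF integrable_mom isotropic V]
    by (intro integral_mono) auto
  ultimately have "real CARD('k) * prob A \<le> dim V / c"
    using integral_norm_proj_matrix_power2[OF integrable_mom isotropic V] by simp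
  then show ?thesis
    using c by (simp add: A_def S_def u_def field_simps)
qed

lemma dim_col_space: "dim (col_space X) = rank X"
  by (simp add: col_space_def dim_span column_rank_def)

lemma dim_row_space: "dim (row_space X) = rank X"
  by (simp add: row_space_def dim_span row_rank_def)

theorem lemma1:
  fixes S :: "real^'m \<Rightarrow> real^'n \<Rightarrow> real^'q"
    and K' :: "(real^'n^'m) set"
    and X :: "real^'n^'m"
    and \<delta> :: real
    and M :: "'w measure"
    and x :: "'w \<Rightarrow> real^'m"
    and y :: "'w \<Rightarrow> real^'n"
  assumes bil: "bilinear S"
    and X_in: "X \<in> null_low_rank S 2 \<inter> diff_set K' - {0}"
    and delta: "0 < \<delta>" "\<delta> < 1"
    and P: "prob_space M"
    and x_rv: "x \<in> borel_measurable M"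
    and y_rv: "y \<in> borel_measurable M"
    \<comment> \<open>(A1) zero mean and identity covariance (second moments exist)\<close>
    and x_int: "\<And>i j. integrable M (\<lambda>\<omega>. x \<omega> $ i * x \<omega> $ j)"
    and y_int: "\<And>i j. integrable M (\<lambda>\<omega>. y \<omega> $ i * y \<omega> $ j)"
    and x_int1: "\<And>i. integrable M (\<lambda>\<omega>. x \<omega> $ i)"
    and y_int1: "\<And>i. integrable M (\<lambda>\<omega>. y \<omega> $ i)"
    and x_mean: "\<And>i. (\<integral>\<omega>. x \<omega> $ i \<partial>M) = 0"
    and y_mean: "\<And>i. (\<integral>\<omega>. y \<omega> $ i \<partial>M) = 0"
    and x_cov: "\<And>i j. (\<integral>\<omega>. (x \<omega> $ i - (\<integral>\<omega>'. x \<omega>' $ i \<partial>M)) *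
                          (x \<omega> $ j - (\<integral>\<omega>'. x \<omega>' $ j \<partial>M)) \<partial>M) = (if i = j then 1 else 0)"
    and y_cov: "\<And>i j. (\<integral>\<omega>. (y \<omega> $ i - (\<integral>\<omega>'. y \<omega>' $ i \<partial>M)) *
                          (y \<omega> $ j - (\<integral>\<omega>'. y \<omega>' $ j \<partial>M)) \<partial>M) = (if i = j then 1 else 0)"
    \<comment> \<open>(A2) x and y independent\<close>
    and xy_indep: "indep_rv M x y"
    \<comment> \<open>(A3) norm and direction independent\<close>
    and x_dir: "indep_rv M (\<lambda>\<omega>. norm (x \<omega>)) (\<lambda>\<omega>. x \<omega> /\<^sub>R norm (x \<omega>))"
    and y_dir: "indep_rv M (\<lambda>\<omega>. norm (y \<omega>)) (\<lambda>\<omega>. y \<omega> /\<^sub>R norm (y \<omega>))"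
  shows "(measure M {\<omega> \<in> space M.
            (norm (proj_matrix (col_space X) *v (x \<omega> /\<^sub>R norm (x \<omega>))))\<^sup>2 \<ge> 1 - \<delta>}
           \<le> 2 / (real CARD('m) * (1 - \<delta>))) \<and>
         (measure M {\<omega> \<in> space M.
            (norm (proj_matrix (row_space X) *v (y \<omega> /\<^sub>R norm (y \<omega>))))\<^sup>2 \<ge> 1 - \<delta>}
           \<le> 2 / (real CARD('n) * (1 - \<delta>)))"
proof -
  have "rank X \<le> 2" using X_in by (simp add: null_low_rank_def)
  then have dims: "dim (col_space X) \<le> 2" "dim (row_space X) \<le> 2"
    by (simp_all add: dim_col_space dim_row_space)
  have "(\<integral>\<omega>. x \<omega> $ i * x \<omega> $ j \<partial>M) = (if i = j then 1 else 0)"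
    "(\<integral>\<omega>. y \<omega> $ i' * y \<omega> $ j' \<partial>M) = (if i' = j' then 1 else 0)" for i j i' j'
    using x_cov[of i j] y_cov[of i' j'] by (simp_all add: x_mean y_mean)
  note bound_x = prob_norm_proj_direction_ge_le[OF P x_rv x_int this(1) x_dir]
   and bound_y = prob_norm_proj_direction_ge_le[OF P y_rv y_int this(2) y_dir]
  have c: "0 < 1 - \<delta>" using delta by simp
  have subspaces: "subspace (col_space X)" "subspace (row_space X)"
    by (simp_all add: col_space_def row_space_def subspace_span)
  have "real (dim (col_space X)) / (real CARD('m) * (1 - \<delta>)) \<le> 2 / (real CARD('m) * (1 - \<delta>))"
    "real (dim (row_space X)) / (real CARD('n) * (1 - \<delta>)) \<le> 2 / (real CARD('n) * (1 - \<delta>))"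
    using dims c by (simp_all add: divide_right_mono)
  then show ?thesis
    using bound_x[OF subspaces(1) c] bound_y[OF subspaces(2) c] by linarith
qed

end
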